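(* Let $\mathcal{H}$ be a complex Hilbert space and $T\in\mathbb{B}(\mathcal{H})$. Then $$w(T) \leq \frac{\sqrt{2}}{2}\Omega(T) \leq \frac{\sqrt{2}}{2}\min\left\{\sqrt{\|TT^* + T^*T\|},\ \sqrt{\|T\|^2 + w(T^2)}\right\}.$$
   Context: $\mathbb{B}(\mathcal{H})$ is the algebra of bounded linear operators on $\mathcal{H}$, $\|\cdot\|$ the usual operator norm, and $w(T)=\sup\{|\langle Tx,x\rangle|:\|x\|=1\}$ the numerical radius. Dragomir's norm is $\Omega(T)=\sup\{\|\zeta T+\eta T^*\|:\ \zeta,\eta\in\mathbb{C},\ |\zeta|^2+|\eta|^2\le 1\}$. *)

theory Defs
  imports "HOL-Analysis.Analysis"
begin

text \<open>The distribution has no complex vector spaces, so we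
introduce them as a type class: a complete real inner-product space (whose norm and
real inner product are the ones of the library) which carries a complex scalar
multiplication extending the real one, and a complex inner product (linear in the
first argument, conjugate symmetric) whose real part is the real inner product.\<close>

class complex_hilbert = real_inner + complete_space +
  fixes scaleC :: "complex \<Rightarrow> 'a \<Rightarrow> 'a" (infixr \<open>*\<^sub>C\<close> 75)
  fixes cinner :: "'a \<Rightarrow> 'a \<Rightarrow> complex"
  assumes scaleC_add_right: "a *\<^sub>C (x + y) = a *\<^sub>C x + a *\<^sub>C y"
    and scaleC_add_left: "(a + b) *\<^sub>C x = a *\<^sub>C x + b *\<^sub>C x"
    and scaleC_scaleC: "a *\<^sub>C (b *\<^sub>C x) = (a * b) *\<^sub>C x"
    and scaleC_one: "1 *\<^sub>C x = x"
    and scaleR_scaleC: "r *\<^sub>R x = complex_of_real r *\<^sub>C x"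
    and cinner_add_left: "cinner (x + y) z = cinner x z + cinner y z"
    and cinner_scaleC_left: "cinner (a *\<^sub>C x) y = a * cinner x y"
    and cinner_commute: "cinner x y = cnj (cinner y x)"
    and inner_cinner: "inner x y = Re (cinner x y)"

definition cblinear :: "('a::complex_hilbert \<Rightarrow> 'a) \<Rightarrow> bool" where
  "cblinear T \<longleftrightarrow> bounded_linear T \<and> (\<forall>a x. T (a *\<^sub>C x) = a *\<^sub>C T x)"

definition adj :: "('a::complex_hilbert \<Rightarrow> 'a) \<Rightarrow> 'a \<Rightarrow> 'a" where
  "adj T = (THE S. \<forall>x y. cinner (T x) y = cinner x (S y))"

text \<open>Numerical radius w(T) = sup{|<Tx,x>| : ||x|| = 1} (with sup of the empty set
taken as 0, relevant only for the zero space).\<close>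
definition numrad :: "('a::complex_hilbert \<Rightarrow> 'a) \<Rightarrow> real" where
  "numrad T = Sup ({cmod (cinner (T x) x) | x. norm x = 1} \<union> {0})"

definition dragomir :: "('a::complex_hilbert \<Rightarrow> 'a) \<Rightarrow> real" where
  "dragomir T = (SUP p \<in> {(\<zeta>, \<eta>). (cmod \<zeta>)\<^sup>2 + (cmod \<eta>)\<^sup>2 \<le> 1}.
      onorm (\<lambda>x. fst p *\<^sub>C T x + snd p *\<^sub>C adj T x))"

end

theory Submission
  imports Defs
begin

text \<open>For a unit vector x, rotate c = <Tx,x> by u = sgn c and take zeta = cnj u / sqrt 2,
eta = u / sqrt 2: since <T*x,x> = cnj c, the operator zeta T + eta T* has
<(zeta T + eta T*)x,x> = sqrt 2 |c|, whence w(T) <= Omega(T) / sqrt 2. For the upper bounds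
fix |zeta|^2 + |eta|^2 <= 1. The Cauchy-Schwarz inequality in C^2 gives
||zeta Tx + eta T*x||^2 <= ||Tx||^2 + ||T*x||^2 = Re <(TT* + T*T)x,x>, while expanding the
square and using <Tx,T*x> = <T^2 x,x> and 2|zeta eta| <= 1 gives
||zeta Tx + eta T*x||^2 <= ||T||^2 + w(T^2) for unit x. The adjoint, the unique S with
<Tx,y> = <x,Sy>, exists by the Riesz representation theorem: a functional f is represented
by a multiple of the element of minimal norm in the closed hyperplane {x. f x = 1}.\<close>

section \<open>Complex inner products\<close>

lemma scaleR_scaleC_commute: "r *\<^sub>R (a *\<^sub>C (x::'a::complex_hilbert)) = a *\<^sub>C (r *\<^sub>R x)"
  by (simp add: scaleR_scaleC scaleC_scaleC mult.commute)

lemma cinner_add_right: "cinner (x::'a::complex_hilbert) (y + z) = cinner x y + cinner x z"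
  by (simp only: cinner_commute[of x] cinner_add_left complex_cnj_add)

lemma cinner_scaleC_right: "cinner (x::'a::complex_hilbert) (a *\<^sub>C y) = cnj a * cinner x y"
  by (simp only: cinner_commute[of x] cinner_scaleC_left complex_cnj_mult)

lemma cinner_self: "cinner (x::'a::complex_hilbert) x = complex_of_real ((norm x)\<^sup>2)"
proof (rule complex_eqI)
  have "Im (cinner x x) = Im (cnj (cinner x x))"
    by (subst cinner_commute) simp
  then show "Im (cinner x x) = Im (complex_of_real ((norm x)\<^sup>2))"
    by simp
  show "Re (cinner x x) = Re (complex_of_real ((norm x)\<^sup>2))"
    by (simp add: inner_cinner[symmetric] power2_norm_eq_inner)
qed

lemma norm_scaleC: "norm (a *\<^sub>C (x::'a::complex_hilbert)) = cmod a * norm x"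
proof -
  have "(norm (a *\<^sub>C x))\<^sup>2 = Re (cinner (a *\<^sub>C x) (a *\<^sub>C x))"
    by (simp only: cinner_self Re_complex_of_real)
  also have "\<dots> = Re (a * cnj a * complex_of_real ((norm x)\<^sup>2))"
    unfolding cinner_scaleC_left cinner_scaleC_right
    by (simp only: cinner_self mult.assoc mult.left_commute)
  also have "\<dots> = (cmod a * norm x)\<^sup>2"
    by (simp only: complex_norm_square[symmetric] of_real_mult[symmetric] Re_complex_of_real
        power_mult_distrib)
  finally show ?thesis
    by (simp add: power2_eq_iff_nonneg)
qed

lemma cnj_sgn_mult_self: "cnj (sgn c) * c = complex_of_real (cmod c)"
proof (cases "c = 0")
  case False
  have "cnj (sgn c) * c = c * cnj c / complex_of_real (cmod c)"
    by (simp add: sgn_eq)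
  also have "\<dots> = complex_of_real ((cmod c)\<^sup>2) / complex_of_real (cmod c)"
    by (simp only: complex_norm_square)
  finally show ?thesis
    using False by (simp add: power2_eq_square)
qed simp

lemma cinner_cauchy_schwarz: "cmod (cinner (x::'a::complex_hilbert) y) \<le> norm x * norm y"
proof -
  define u where "u = cnj (sgn (cinner x y))"
  have "cmod (cinner x y) = Re (cinner (u *\<^sub>C x) y)"
    by (simp add: u_def cinner_scaleC_left cnj_sgn_mult_self)
  also have "\<dots> \<le> norm (u *\<^sub>C x) * norm y"
    by (simp only: inner_cinner[symmetric] norm_cauchy_schwarz)
  also have "\<dots> \<le> norm x * norm y"
    by (simp add: norm_scaleC u_def norm_sgn mult_right_le_one_le)
  finally show ?thesis .
qed

lemma cinner_extensionality: "(\<And>x. cinner x u = cinner x v) \<Longrightarrow> (u::'a::complex_hilbert) = v"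
  by (metis inner_cinner inner_diff_right inner_eq_zero_iff right_minus_eq)

lemma Im_cinner: "Im (cinner (x::'a::complex_hilbert) y) = inner ((- \<i>) *\<^sub>C x) y"
  by (simp add: inner_cinner cinner_scaleC_left)

lemma bounded_linear_scaleC: "bounded_linear (\<lambda>x::'a::complex_hilbert. a *\<^sub>C x)"
proof (rule bounded_linear_intro[where K="cmod a"])
  show "a *\<^sub>C (x + y) = a *\<^sub>C x + a *\<^sub>C y" for x y :: 'a
    by (rule scaleC_add_right)
  show "a *\<^sub>C (r *\<^sub>R x) = r *\<^sub>R (a *\<^sub>C x)" for r and x :: 'a
    by (rule scaleR_scaleC_commute[symmetric])
  show "norm (a *\<^sub>C x) \<le> norm x * cmod a" for x :: 'a
    by (simp add: norm_scaleC mult.commute)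
qed

section \<open>Riesz representation and the adjoint\<close>

lemma parallelogram_law:
  fixes x y :: "'a::real_inner"
  shows "(norm (x + y))\<^sup>2 + (norm (x - y))\<^sup>2 = 2 * (norm x)\<^sup>2 + 2 * (norm y)\<^sup>2"
  by (simp add: power2_norm_eq_inner inner_simps inner_commute)

text \<open>Midpoints stay in A, so the parallelogram law gives
||X m - X n||^2 <= 2 ||X m||^2 + 2 ||X n||^2 - 4 d^2.\<close>

lemma Cauchy_if_norm_tendsto_lower_bound_convex:
  fixes X :: "nat \<Rightarrow> 'a::real_inner"
  assumes "convex A" and X_in: "\<And>n. X n \<in> A" and lower: "\<And>x. x \<in> A \<Longrightarrow> d \<le> norm x"
    and lim: "(\<lambda>n. norm (X n)) \<longlonglongrightarrow> d"
  shows "Cauchy X"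
proof (rule metric_CauchyI)
  fix r :: real
  assume "r > 0"
  have "0 \<le> d"
    using lim by (rule LIMSEQ_le_const) simp
  have "(\<lambda>n. (norm (X n))\<^sup>2) \<longlonglongrightarrow> d\<^sup>2"
    using lim by (rule tendsto_power)
  then have "\<forall>\<^sub>F n in sequentially. (norm (X n))\<^sup>2 < d\<^sup>2 + r\<^sup>2 / 4"
    by (rule order_tendstoD) (use \<open>r > 0\<close> in simp)
  then obtain N where N: "\<And>n. n \<ge> N \<Longrightarrow> (norm (X n))\<^sup>2 < d\<^sup>2 + r\<^sup>2 / 4"
    by (auto simp: eventually_sequentially)
  have "dist (X m) (X n) < r" if "m \<ge> N" "n \<ge> N" for m n
  proof -
    have "(1/2) *\<^sub>R X m + (1/2) *\<^sub>R X n \<in> A"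
      using \<open>convex A\<close> X_in[of m] X_in[of n] by (rule convexD) auto
    then have "2 * d \<le> norm (X m + X n)"
      using lower by (fastforce simp: scaleR_add_right[symmetric])
    then have "(2 * d)\<^sup>2 \<le> (norm (X m + X n))\<^sup>2"
      using \<open>0 \<le> d\<close> by (intro power_mono) auto
    then have "(norm (X m - X n))\<^sup>2 < r\<^sup>2"
      using parallelogram_law[of "X m" "X n"] N[OF \<open>m \<ge> N\<close>] N[OF \<open>n \<ge> N\<close>]
      by (simp add: power_mult_distrib)
    then show ?thesis
      using \<open>r > 0\<close> by (simp add: dist_norm power_less_imp_less_base)
  qed
  then show "\<exists>N. \<forall>m\<ge>N. \<forall>n\<ge>N. dist (X m) (X n) < r"
    by blast
qed

lemma closed_convex_has_min_norm:
  fixes A :: "'a::{real_inner,complete_space} set"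
  assumes "closed A" "convex A" "A \<noteq> {}"
  obtains z where "z \<in> A" "\<And>x. x \<in> A \<Longrightarrow> norm z \<le> norm x"
proof -
  define d where "d = Inf (norm ` A)"
  have bdd: "bdd_below (norm ` A)"
    by (rule bdd_belowI[of _ 0]) auto
  have lower: "d \<le> norm x" if "x \<in> A" for x
    unfolding d_def using that bdd by (intro cInf_lower) auto
  have "\<exists>x\<in>A. norm x < d + inverse (real (Suc n))" for n
    using cInf_less_iff[OF _ bdd, of "d + inverse (real (Suc n))"] \<open>A \<noteq> {}\<close>
    unfolding d_def by auto
  then obtain X where X_in: "\<And>n. X n \<in> A"
    and X_less: "\<And>n. norm (X n) < d + inverse (real (Suc n))"
    by metis
  have lim: "(\<lambda>n. norm (X n)) \<longlonglongrightarrow> d"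
    by (rule tendsto_sandwich[OF _ _ tendsto_const LIMSEQ_inverse_real_of_nat_add])
      (use X_in X_less lower in \<open>auto intro: less_imp_le always_eventually\<close>)
  have "Cauchy X"
    using \<open>convex A\<close> X_in lower lim by (rule Cauchy_if_norm_tendsto_lower_bound_convex)
  then obtain z where z: "X \<longlonglongrightarrow> z"
    by (auto simp: Cauchy_convergent_iff convergent_def)
  show thesis
  proof
    show "z \<in> A"
      using \<open>closed A\<close> X_in z by (rule closed_sequentially)
    have "norm z = d"
      using tendsto_norm[OF z] lim by (rule LIMSEQ_unique)
    then show "norm z \<le> norm x" if "x \<in> A" for x
      using lower[OF that] by simp
  qed
qed

lemma inner_eq_zero_if_norm_minimal:
  fixes z k :: "'a::real_inner"
  assumes min: "\<And>t. norm z \<le> norm (z + t *\<^sub>R k)"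
  shows "inner z k = 0"
proof (cases "k = 0")
  case False
  define a where "a = inner z k"
  define b where "b = (norm k)\<^sup>2"
  have "b > 0"
    using False by (simp add: b_def)
  have "(norm z)\<^sup>2 \<le> (norm (z + (- a / b) *\<^sub>R k))\<^sup>2"
    using min[of "- a / b"] by (simp add: power_mono)
  also have "\<dots> = (norm z)\<^sup>2 - a\<^sup>2 / b"
    using \<open>b > 0\<close> unfolding a_def b_def power2_norm_eq_inner
    by (simp add: inner_simps inner_commute power2_eq_square field_simps)
  finally have "a\<^sup>2 / b \<le> 0"
    by simp
  then show ?thesis
    using \<open>b > 0\<close> by (simp add: a_def divide_le_0_iff)
qed simp

lemma riesz_representation_real:
  fixes f :: "'a::{real_inner,complete_space} \<Rightarrow> real"
  assumes "bounded_linear f"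
  obtains w where "\<And>x. f x = inner x w"
proof (cases "\<forall>x. f x = 0")
  case True
  then show thesis
    by (intro that[of 0]) simp
next
  case False
  interpret f: bounded_linear f by fact
  obtain x0 where "f x0 \<noteq> 0"
    using False by blast
  define A where "A = {x. f x = 1}"
  have "closed A"
    unfolding A_def by (intro closed_Collect_eq f.continuous_on continuous_on_id continuous_on_const)
  moreover have "convex A"
    by (auto simp: A_def convex_def f.add f.scaleR)
  moreover have "x0 /\<^sub>R f x0 \<in> A"
    using \<open>f x0 \<noteq> 0\<close> by (simp add: A_def f.scaleR)
  ultimately obtain z where "z \<in> A" and min: "\<And>x. x \<in> A \<Longrightarrow> norm z \<le> norm x"
    by (metis closed_convex_has_min_norm empty_iff)
  have orth: "inner z k = 0" if "f k = 0" for k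
    using \<open>z \<in> A\<close> that by (intro inner_eq_zero_if_norm_minimal min) (simp add: A_def f.add f.scaleR)
  have "z \<noteq> 0"
    using \<open>z \<in> A\<close> by (auto simp: A_def f.zero)
  show thesis
  proof (rule that)
    fix x
    have "inner z (x - f x *\<^sub>R z) = 0"
      using \<open>z \<in> A\<close> by (intro orth) (simp add: A_def f.diff f.scaleR)
    then have "inner z x = f x * (norm z)\<^sup>2"
      by (simp add: inner_simps power2_norm_eq_inner)
    then show "f x = inner x (z /\<^sub>R (norm z)\<^sup>2)"
      using \<open>z \<noteq> 0\<close> by (simp add: inner_commute)
  qed
qed

lemma cblinear_imp_bounded_linear: "cblinear T \<Longrightarrow> bounded_linear T"
  by (simp add: cblinear_def)

lemma cblinear_scaleC: "cblinear T \<Longrightarrow> T (a *\<^sub>C x) = a *\<^sub>C T x"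
  by (simp add: cblinear_def)

lemma adjoint_exists:
  fixes T :: "'a::complex_hilbert \<Rightarrow> 'a"
  assumes T: "cblinear T"
  shows "\<exists>S. \<forall>x y. cinner (T x) y = cinner x (S y)"
proof -
  have "\<exists>z. \<forall>x. inner (T x) y = inner x z" for y
  proof -
    have "bounded_linear (\<lambda>x. inner (T x) y)"
      by (rule bounded_linear_compose[OF bounded_linear_inner_left cblinear_imp_bounded_linear[OF T]])
    then obtain z where "\<And>x. inner (T x) y = inner x z"
      using riesz_representation_real by blast
    then show ?thesis
      by blast
  qed
  then obtain S where S: "\<And>x y. inner (T x) y = inner x (S y)"
    by metis
  have "cinner (T x) y = cinner x (S y)" for x y
  proof (rule complex_eqI)
    show "Re (cinner (T x) y) = Re (cinner x (S y))"
      using S[of x y] by (simp only: inner_cinner)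
    show "Im (cinner (T x) y) = Im (cinner x (S y))"
      using S[of "(- \<i>) *\<^sub>C x" y] by (simp only: Im_cinner cblinear_scaleC[OF T])
  qed
  then show ?thesis
    by blast
qed

lemma cinner_adj_right:
  fixes T :: "'a::complex_hilbert \<Rightarrow> 'a"
  assumes "cblinear T"
  shows "cinner (T x) y = cinner x (adj T y)"
proof -
  obtain S where S: "\<forall>x y. cinner (T x) y = cinner x (S y)"
    using adjoint_exists[OF assms] by blast
  have "\<forall>x y. cinner (T x) y = cinner x (adj T y)"
    unfolding adj_def
  proof (rule theI[of _ S])
    fix S' assume S': "\<forall>x y. cinner (T x) y = cinner x (S' y)"
    show "S' = S"
    proof (intro ext cinner_extensionality)
      show "cinner x (S' y) = cinner x (S y)" for x y
        using S[rule_format, of x y] S'[rule_format, of x y] by simp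
    qed
  qed (fact S)
  then show ?thesis
    by blast
qed

lemma cinner_adj_left:
  fixes T :: "'a::complex_hilbert \<Rightarrow> 'a"
  assumes "cblinear T"
  shows "cinner (adj T y) x = cinner y (T x)"
  by (simp only: cinner_commute[of "adj T y" x] cinner_adj_right[OF assms, symmetric]
      cinner_commute[of y "T x"])

lemma norm_adj_le:
  fixes T :: "'a::complex_hilbert \<Rightarrow> 'a"
  assumes T: "cblinear T"
  shows "norm (adj T y) \<le> onorm T * norm y"
proof -
  let ?z = "adj T y"
  have "(norm ?z)\<^sup>2 = Re (cinner (T ?z) y)"
    by (simp only: cinner_adj_right[OF T] cinner_self Re_complex_of_real)
  also have "\<dots> \<le> norm (T ?z) * norm y"
    using complex_Re_le_cmod cinner_cauchy_schwarz by (rule order_trans)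
  also have "\<dots> \<le> onorm T * norm ?z * norm y"
    by (intro mult_right_mono onorm cblinear_imp_bounded_linear[OF T]) simp
  finally have "norm ?z * norm ?z \<le> (onorm T * norm y) * norm ?z"
    by (simp add: power2_eq_square algebra_simps)
  then show ?thesis
    using onorm_pos_le[OF cblinear_imp_bounded_linear[OF T]]
    by (cases "norm ?z = 0") (simp_all add: mult_le_cancel_right)
qed

lemma bounded_linear_adj:
  fixes T :: "'a::complex_hilbert \<Rightarrow> 'a"
  assumes T: "cblinear T"
  shows "bounded_linear (adj T)"
proof (rule bounded_linear_intro[where K="onorm T"])
  show "adj T (x + y) = adj T x + adj T y" for x y
    by (rule cinner_extensionality) (simp only: cinner_adj_right[OF T, symmetric] cinner_add_right)
  show "adj T (r *\<^sub>R x) = r *\<^sub>R adj T x" for r x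
    by (rule cinner_extensionality)
      (simp only: cinner_adj_right[OF T, symmetric] scaleR_scaleC cinner_scaleC_right)
  show "norm (adj T x) \<le> norm x * onorm T" for x
    using norm_adj_le[OF T, of x] by (simp add: mult.commute)
qed

lemma bounded_linear_adj_combination:
  fixes T :: "'a::complex_hilbert \<Rightarrow> 'a"
  assumes T: "cblinear T"
  shows "bounded_linear (\<lambda>x. \<zeta> *\<^sub>C T x + \<eta> *\<^sub>C adj T x)"
  using bounded_linear_compose[OF bounded_linear_scaleC cblinear_imp_bounded_linear[OF T]]
    bounded_linear_compose[OF bounded_linear_scaleC bounded_linear_adj[OF T]]
  by (rule bounded_linear_add)

lemma bounded_linear_adj_sum:
  fixes T :: "'a::complex_hilbert \<Rightarrow> 'a"
  assumes T: "cblinear T"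
  shows "bounded_linear (\<lambda>x. T (adj T x) + adj T (T x))"
  using bounded_linear_compose[OF cblinear_imp_bounded_linear[OF T] bounded_linear_adj[OF T]]
    bounded_linear_compose[OF bounded_linear_adj[OF T] cblinear_imp_bounded_linear[OF T]]
  by (rule bounded_linear_add)

section \<open>Numerical radius\<close>

lemma cmod_cinner_le_onorm:
  fixes R :: "'a::complex_hilbert \<Rightarrow> 'a"
  assumes "bounded_linear R"
  shows "cmod (cinner (R x) x) \<le> onorm R * (norm x)\<^sup>2"
proof -
  have "cmod (cinner (R x) x) \<le> norm (R x) * norm x"
    by (rule cinner_cauchy_schwarz)
  also have "\<dots> \<le> onorm R * norm x * norm x"
    by (intro mult_right_mono onorm[OF assms]) simp
  finally show ?thesis
    by (simp add: power2_eq_square mult.assoc)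
qed

lemma bdd_above_numrad:
  fixes R :: "'a::complex_hilbert \<Rightarrow> 'a"
  assumes "bounded_linear R"
  shows "bdd_above ({cmod (cinner (R x) x) | x. norm x = 1} \<union> {0})"
proof (rule bdd_aboveI[where M="onorm R"])
  have "cmod (cinner (R x) x) \<le> onorm R" if "norm x = 1" for x
    using cmod_cinner_le_onorm[OF assms, of x] that by simp
  then show "t \<le> onorm R" if "t \<in> {cmod (cinner (R x) x) | x. norm x = 1} \<union> {0}" for t
    using that onorm_pos_le[OF assms] by auto
qed

lemma numrad_nonneg:
  fixes R :: "'a::complex_hilbert \<Rightarrow> 'a"
  assumes "bounded_linear R"
  shows "0 \<le> numrad R"
  unfolding numrad_def by (rule cSup_upper[OF _ bdd_above_numrad[OF assms]]) simp

lemma numrad_leI: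
  fixes R :: "'a::complex_hilbert \<Rightarrow> 'a"
  assumes "0 \<le> b" "\<And>x. norm x = 1 \<Longrightarrow> cmod (cinner (R x) x) \<le> b"
  shows "numrad R \<le> b"
  unfolding numrad_def using assms by (intro cSup_least) auto

lemma cmod_cinner_le_numrad:
  fixes R :: "'a::complex_hilbert \<Rightarrow> 'a"
  assumes "bounded_linear R"
  shows "cmod (cinner (R x) x) \<le> numrad R * (norm x)\<^sup>2"
proof (cases "x = 0")
  case True
  then show ?thesis
    using linear_0[OF bounded_linear.linear[OF assms]] by (simp add: cinner_self)
next
  case False
  interpret R: bounded_linear R by fact
  define y where "y = (1 / norm x) *\<^sub>R x"
  have "cinner (R y) y = complex_of_real (1 / (norm x)\<^sup>2) * cinner (R x) x"
    unfolding y_def R.scaleR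
    by (simp add: scaleR_scaleC cinner_scaleC_left cinner_scaleC_right power2_eq_square)
  then have "cmod (cinner (R y) y) = cmod (cinner (R x) x) / (norm x)\<^sup>2"
    by (simp add: norm_divide norm_power)
  moreover have "cmod (cinner (R y) y) \<le> numrad R"
    unfolding numrad_def using False
    by (intro cSup_upper[OF _ bdd_above_numrad[OF assms]]) (auto simp: y_def)
  ultimately show ?thesis
    using False by (simp add: divide_le_eq)
qed

section \<open>Dragomir's norm\<close>

lemma norm_sq_scaleC_add_le:
  fixes \<zeta> \<eta> :: complex and u v :: "'a::complex_hilbert"
  shows "(norm (\<zeta> *\<^sub>C u + \<eta> *\<^sub>C v))\<^sup>2
           \<le> ((cmod \<zeta>)\<^sup>2 + (cmod \<eta>)\<^sup>2) * ((norm u)\<^sup>2 + (norm v)\<^sup>2)"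
proof -
  have "norm (\<zeta> *\<^sub>C u + \<eta> *\<^sub>C v) \<le> cmod \<zeta> * norm u + cmod \<eta> * norm v"
    using norm_triangle_ineq[of "\<zeta> *\<^sub>C u" "\<eta> *\<^sub>C v"] by (simp add: norm_scaleC)
  then have "(norm (\<zeta> *\<^sub>C u + \<eta> *\<^sub>C v))\<^sup>2 \<le> (cmod \<zeta> * norm u + cmod \<eta> * norm v)\<^sup>2"
    by (intro power_mono) simp_all
  also have "\<dots> \<le> ((cmod \<zeta>)\<^sup>2 + (cmod \<eta>)\<^sup>2) * ((norm u)\<^sup>2 + (norm v)\<^sup>2)"
  proof -
    have "((cmod \<zeta>)\<^sup>2 + (cmod \<eta>)\<^sup>2) * ((norm u)\<^sup>2 + (norm v)\<^sup>2)
            - (cmod \<zeta> * norm u + cmod \<eta> * norm v)\<^sup>2 = (cmod \<zeta> * norm v - cmod \<eta> * norm u)\<^sup>2"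
      by (simp add: power2_eq_square algebra_simps)
    then show ?thesis
      by (metis diff_ge_0_iff_ge zero_le_power2)
  qed
  finally show ?thesis .
qed

lemma norm_sq_scaleC_add_le_cinner:
  fixes \<zeta> \<eta> :: complex and u v :: "'a::complex_hilbert"
  assumes "norm u \<le> K" "norm v \<le> K" "cmod (cinner u v) \<le> M"
  shows "(norm (\<zeta> *\<^sub>C u + \<eta> *\<^sub>C v))\<^sup>2 \<le> ((cmod \<zeta>)\<^sup>2 + (cmod \<eta>)\<^sup>2) * (K\<^sup>2 + M)"
proof -
  have "0 \<le> M"
    using assms(3) norm_ge_zero by (rule order_trans[rotated])
  have u: "(norm (\<zeta> *\<^sub>C u))\<^sup>2 \<le> (cmod \<zeta>)\<^sup>2 * K\<^sup>2"
    unfolding norm_scaleC power_mult_distrib using assms(1) by (intro mult_left_mono power_mono) simp_all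
  have v: "(norm (\<eta> *\<^sub>C v))\<^sup>2 \<le> (cmod \<eta>)\<^sup>2 * K\<^sup>2"
    unfolding norm_scaleC power_mult_distrib using assms(2) by (intro mult_left_mono power_mono) simp_all
  have "inner (\<zeta> *\<^sub>C u) (\<eta> *\<^sub>C v) \<le> cmod (cinner (\<zeta> *\<^sub>C u) (\<eta> *\<^sub>C v))"
    by (simp only: inner_cinner complex_Re_le_cmod)
  also have "\<dots> = cmod \<zeta> * cmod \<eta> * cmod (cinner u v)"
    by (simp add: cinner_scaleC_left cinner_scaleC_right norm_mult)
  also have "\<dots> \<le> cmod \<zeta> * cmod \<eta> * M"
    using assms(3) by (intro mult_left_mono) simp_all
  finally have uv: "inner (\<zeta> *\<^sub>C u) (\<eta> *\<^sub>C v) \<le> cmod \<zeta> * cmod \<eta> * M" .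
  have "2 * (cmod \<zeta> * cmod \<eta>) * M \<le> ((cmod \<zeta>)\<^sup>2 + (cmod \<eta>)\<^sup>2) * M"
    using sum_squares_bound[of "cmod \<zeta>" "cmod \<eta>"] \<open>0 \<le> M\<close> by (intro mult_right_mono) simp_all
  moreover have "(norm (\<zeta> *\<^sub>C u + \<eta> *\<^sub>C v))\<^sup>2
      = (norm (\<zeta> *\<^sub>C u))\<^sup>2 + (norm (\<eta> *\<^sub>C v))\<^sup>2 + 2 * inner (\<zeta> *\<^sub>C u) (\<eta> *\<^sub>C v)"
    by (simp add: power2_norm_eq_inner inner_simps inner_commute)
  ultimately show ?thesis
    using u v uv by (simp add: algebra_simps)
qed

lemma norm_sq_adj_combination_le_onorm:
  fixes T :: "'a::complex_hilbert \<Rightarrow> 'a"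
  assumes T: "cblinear T" and disk: "(cmod \<zeta>)\<^sup>2 + (cmod \<eta>)\<^sup>2 \<le> 1"
  shows "(norm (\<zeta> *\<^sub>C T x + \<eta> *\<^sub>C adj T x))\<^sup>2
           \<le> onorm (\<lambda>x. T (adj T x) + adj T (T x)) * (norm x)\<^sup>2"
proof -
  have "(norm (\<zeta> *\<^sub>C T x + \<eta> *\<^sub>C adj T x))\<^sup>2
      \<le> ((cmod \<zeta>)\<^sup>2 + (cmod \<eta>)\<^sup>2) * ((norm (T x))\<^sup>2 + (norm (adj T x))\<^sup>2)"
    by (rule norm_sq_scaleC_add_le)
  also have "\<dots> \<le> (norm (T x))\<^sup>2 + (norm (adj T x))\<^sup>2"
    by (rule mult_left_le_one_le) (use disk in simp_all)
  also have "\<dots> = Re (cinner (T (adj T x) + adj T (T x)) x)"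
  proof -
    have "(norm (T x))\<^sup>2 = Re (cinner (adj T (T x)) x)"
      by (simp only: cinner_adj_left[OF T] cinner_self Re_complex_of_real)
    moreover have "(norm (adj T x))\<^sup>2 = Re (cinner (T (adj T x)) x)"
      by (simp only: cinner_adj_right[OF T] cinner_self Re_complex_of_real)
    ultimately show ?thesis
      by (simp add: cinner_add_left)
  qed
  also have "\<dots> \<le> onorm (\<lambda>x. T (adj T x) + adj T (T x)) * (norm x)\<^sup>2"
    using complex_Re_le_cmod cmod_cinner_le_onorm[OF bounded_linear_adj_sum[OF T]]
    by (rule order_trans)
  finally show ?thesis .
qed

lemma norm_sq_adj_combination_le_numrad:
  fixes T :: "'a::complex_hilbert \<Rightarrow> 'a"
  assumes T: "cblinear T" and disk: "(cmod \<zeta>)\<^sup>2 + (cmod \<eta>)\<^sup>2 \<le> 1"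
  shows "(norm (\<zeta> *\<^sub>C T x + \<eta> *\<^sub>C adj T x))\<^sup>2
           \<le> ((onorm T)\<^sup>2 + numrad (T \<circ> T)) * (norm x)\<^sup>2"
proof -
  have blT: "bounded_linear T"
    using T by (rule cblinear_imp_bounded_linear)
  have blTT: "bounded_linear (T \<circ> T)"
    unfolding comp_def using blT blT by (rule bounded_linear_compose)
  have "(norm (\<zeta> *\<^sub>C T x + \<eta> *\<^sub>C adj T x))\<^sup>2
      \<le> ((cmod \<zeta>)\<^sup>2 + (cmod \<eta>)\<^sup>2) * ((onorm T * norm x)\<^sup>2 + numrad (T \<circ> T) * (norm x)\<^sup>2)"
  proof (rule norm_sq_scaleC_add_le_cinner)
    show "norm (T x) \<le> onorm T * norm x"
      using blT by (rule onorm)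
    show "norm (adj T x) \<le> onorm T * norm x"
      using T by (rule norm_adj_le)
    have "cinner (T x) (adj T x) = cinner ((T \<circ> T) x) x"
      by (simp add: cinner_adj_right[OF T])
    then show "cmod (cinner (T x) (adj T x)) \<le> numrad (T \<circ> T) * (norm x)\<^sup>2"
      using cmod_cinner_le_numrad[OF blTT] by simp
  qed
  also have "\<dots> \<le> (onorm T * norm x)\<^sup>2 + numrad (T \<circ> T) * (norm x)\<^sup>2"
    by (rule mult_left_le_one_le) (use disk numrad_nonneg[OF blTT] in simp_all)
  also have "\<dots> = ((onorm T)\<^sup>2 + numrad (T \<circ> T)) * (norm x)\<^sup>2"
    by (simp add: power_mult_distrib algebra_simps)
  finally show ?thesis .
qed

lemma onorm_le_sqrtI:
  assumes "0 \<le> B" "\<And>x. (norm (f x))\<^sup>2 \<le> B * (norm x)\<^sup>2"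
  shows "onorm f \<le> sqrt B"
proof (rule onorm_bound)
  show "0 \<le> sqrt B"
    using assms(1) by simp
  show "norm (f x) \<le> sqrt B * norm x" for x
    using real_le_rsqrt[OF assms(2)[of x]] by (simp add: real_sqrt_mult)
qed

lemma dragomir_le_sqrtI:
  fixes T :: "'a::complex_hilbert \<Rightarrow> 'a"
  assumes "0 \<le> B"
    and "\<And>\<zeta> \<eta> x. (cmod \<zeta>)\<^sup>2 + (cmod \<eta>)\<^sup>2 \<le> 1 \<Longrightarrow>
           (norm (\<zeta> *\<^sub>C T x + \<eta> *\<^sub>C adj T x))\<^sup>2 \<le> B * (norm x)\<^sup>2"
  shows "dragomir T \<le> sqrt B"
  unfolding dragomir_def
proof (rule cSUP_least)
  have "(0, 0) \<in> {(\<zeta>, \<eta>). (cmod \<zeta>)\<^sup>2 + (cmod \<eta>)\<^sup>2 \<le> 1}"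
    by simp
  then show "{(\<zeta>, \<eta>). (cmod \<zeta>)\<^sup>2 + (cmod \<eta>)\<^sup>2 \<le> 1} \<noteq> {}"
    by blast
  show "onorm (\<lambda>x. fst p *\<^sub>C T x + snd p *\<^sub>C adj T x) \<le> sqrt B"
    if "p \<in> {(\<zeta>, \<eta>). (cmod \<zeta>)\<^sup>2 + (cmod \<eta>)\<^sup>2 \<le> 1}" for p
    using that assms by (intro onorm_le_sqrtI) auto
qed

lemma onorm_adj_combination_le_dragomir:
  fixes T :: "'a::complex_hilbert \<Rightarrow> 'a"
  assumes T: "cblinear T" and disk: "(cmod \<zeta>)\<^sup>2 + (cmod \<eta>)\<^sup>2 \<le> 1"
  shows "onorm (\<lambda>x. \<zeta> *\<^sub>C T x + \<eta> *\<^sub>C adj T x) \<le> dragomir T"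
proof -
  let ?B = "onorm (\<lambda>x. T (adj T x) + adj T (T x))"
  let ?D = "{(\<zeta>, \<eta>). (cmod \<zeta>)\<^sup>2 + (cmod \<eta>)\<^sup>2 \<le> 1}"
  have "bdd_above ((\<lambda>p. onorm (\<lambda>x. fst p *\<^sub>C T x + snd p *\<^sub>C adj T x)) ` ?D)"
  proof (rule bdd_aboveI2)
    show "onorm (\<lambda>x. fst p *\<^sub>C T x + snd p *\<^sub>C adj T x) \<le> sqrt ?B" if "p \<in> ?D" for p
      using that onorm_pos_le[OF bounded_linear_adj_sum[OF T]]
      by (intro onorm_le_sqrtI norm_sq_adj_combination_le_onorm[OF T]) auto
  qed
  then show ?thesis
    unfolding dragomir_def
    using cSUP_upper[of "(\<zeta>, \<eta>)" ?D "\<lambda>p. onorm (\<lambda>x. fst p *\<^sub>C T x + snd p *\<^sub>C adj T x)"] disk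
    by simp
qed

lemma numrad_le_dragomir:
  fixes T :: "'a::complex_hilbert \<Rightarrow> 'a"
  assumes T: "cblinear T"
  shows "numrad T \<le> sqrt 2 / 2 * dragomir T"
proof (rule numrad_leI)
  have "0 \<le> onorm (\<lambda>x. 0 *\<^sub>C T x + 0 *\<^sub>C adj T x)"
    by (rule onorm_pos_le[OF bounded_linear_adj_combination[OF T]])
  also have "\<dots> \<le> dragomir T"
    by (rule onorm_adj_combination_le_dragomir[OF T]) simp
  finally show "0 \<le> sqrt 2 / 2 * dragomir T"
    by simp
next
  fix x :: 'a
  assume "norm x = 1"
  define c where "c = cinner (T x) x"
  define \<zeta> where "\<zeta> = cnj (sgn c) / complex_of_real (sqrt 2)"
  define \<eta> where "\<eta> = sgn c / complex_of_real (sqrt 2)"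
  have disk: "(cmod \<zeta>)\<^sup>2 + (cmod \<eta>)\<^sup>2 \<le> 1"
    by (simp add: \<zeta>_def \<eta>_def norm_divide power_divide norm_sgn)
  have "cinner (adj T x) x = cnj c"
    by (simp only: c_def cinner_adj_left[OF T] cinner_commute[of x "T x"])
  then have "cinner (\<zeta> *\<^sub>C T x + \<eta> *\<^sub>C adj T x) x = \<zeta> * c + cnj (\<zeta> * c)"
    by (simp add: cinner_add_left cinner_scaleC_left c_def \<zeta>_def \<eta>_def)
  also have "\<zeta> * c = complex_of_real (cmod c / sqrt 2)"
    by (simp add: \<zeta>_def cnj_sgn_mult_self)
  also have "complex_of_real (cmod c / sqrt 2) + cnj (complex_of_real (cmod c / sqrt 2))
      = complex_of_real (2 * (cmod c / sqrt 2))"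
    by (simp only: complex_cnj_complex_of_real of_real_add mult_2)
  also have "2 * (cmod c / sqrt 2) = sqrt 2 * cmod c"
    by (simp add: field_simps)
  finally have "sqrt 2 * cmod c = cmod (cinner (\<zeta> *\<^sub>C T x + \<eta> *\<^sub>C adj T x) x)"
    by (simp only: norm_of_real abs_mult real_sqrt_abs2 abs_norm_cancel) simp
  also have "\<dots> \<le> onorm (\<lambda>x. \<zeta> *\<^sub>C T x + \<eta> *\<^sub>C adj T x)"
    using cmod_cinner_le_onorm[OF bounded_linear_adj_combination[OF T, of \<zeta> \<eta>], of x] \<open>norm x = 1\<close>
    by simp
  also have "\<dots> \<le> dragomir T"
    using T disk by (rule onorm_adj_combination_le_dragomir)
  also have "\<dots> = sqrt 2 * (sqrt 2 / 2 * dragomir T)"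
    by simp
  finally show "cmod (cinner (T x) x) \<le> sqrt 2 / 2 * dragomir T"
    unfolding c_def by simp
qed

theorem theorem3p4:
  fixes T :: "'a::complex_hilbert \<Rightarrow> 'a"
  assumes "cblinear T"
  shows "numrad T \<le> sqrt 2 / 2 * dragomir T \<and>
         sqrt 2 / 2 * dragomir T \<le> sqrt 2 / 2 *
           min (sqrt (onorm (\<lambda>x. T (adj T x) + adj T (T x))))
               (sqrt ((onorm T)\<^sup>2 + numrad (T \<circ> T)))"
proof -
  have "bounded_linear T"
    using assms by (rule cblinear_imp_bounded_linear)
  then have "bounded_linear (T \<circ> T)"
    unfolding comp_def using bounded_linear_compose by blast
  have "dragomir T \<le> sqrt (onorm (\<lambda>x. T (adj T x) + adj T (T x)))"
    using onorm_pos_le[OF bounded_linear_adj_sum[OF assms]] norm_sq_adj_combination_le_onorm[OF assms]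
    by (rule dragomir_le_sqrtI)
  moreover have "dragomir T \<le> sqrt ((onorm T)\<^sup>2 + numrad (T \<circ> T))"
    using numrad_nonneg[OF \<open>bounded_linear (T \<circ> T)\<close>] norm_sq_adj_combination_le_numrad[OF assms]
    by (intro dragomir_le_sqrtI) simp_all
  ultimately show ?thesis
    using numrad_le_dragomir[OF assms] by simp
qed

end
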